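(* Let $G$ be a closed subgroup of $S_\infty$. Then there is a good quantifier $Q_G$ of type $\langle 2\rangle$ on $\mathbb{N}$ with $\mathrm{Aut}(Q_G)=G$.
   Context: $S_\infty$ is the group of permutations of $\mathbb{N}$ with the topology of pointwise convergence. A quantifier of type $\langle k\rangle$ on $\mathbb{N}$ is a set $Q\subseteq 2^{\mathbb{N}^k}$ (a family of subsets of $\mathbb{N}^k$; $2^{\mathbb{N}^k}$ carries the product topology). $Q$ is downwards closed if it is closed under subsets. For a map $p$ and $A\subseteq\mathbb{N}^k$, $p(A)=\{(p(a_1),\dots,p(a_k)):(a_1,\dots,a_k)\in A\}$. For $Q$ closed and downwards closed, a function $p:n\to\mathbb{N}$ is compatible with $Q$ if for every $A\subseteq n^k$, $A\in Q\iff p(A)\in Q$. A permutation $f$ of $\mathbb{N}$ fixes $Q$ if $A\in Q\iff f(A)\in Q$ for all $A\subseteq\mathbb{N}^k$; $\mathrm{Aut}(Q)$ is the group of such permutations. $Q$ is good if it is closed, downwards closed, and every finite injection $p:n\to\mathbb{N}$ compatible with $Q$ extends to a permutation of $\mathbb{N}$ fixing $Q$. *)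

theory Defs
  imports Main
begin

text \<open>Elements of S_infinity are represented as bijections nat => nat.
  A quantifier of type <2> on nat is a set of subsets of nat x nat.\<close>

definition pmap2 :: "(nat \<Rightarrow> nat) \<Rightarrow> (nat \<times> nat) set \<Rightarrow> (nat \<times> nat) set" where
  "pmap2 p A = (\<lambda>(a, b). (p a, p b)) ` A"

text \<open>Closed subgroup of S_infinity (topology of pointwise convergence):
  a set of permutations containing the identity, closed under composition and inverses,
  and containing every permutation each of whose finite restrictions to {0..<n}
  agrees with some element of G.\<close>
definition closed_subgroup_Sinf :: "(nat \<Rightarrow> nat) set \<Rightarrow> bool" where
  "closed_subgroup_Sinf G \<longleftrightarrow>
     (\<forall>f\<in>G. bij f) \<and> id \<in> G \<and>
     (\<forall>f\<in>G. \<forall>g\<in>G. f \<circ> g \<in> G) \<and>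
     (\<forall>f\<in>G. inv f \<in> G) \<and>
     (\<forall>f. bij f \<and> (\<forall>n. \<exists>g\<in>G. \<forall>i<n. g i = f i) \<longrightarrow> f \<in> G)"

text \<open>Closedness of Q in the product topology on 2^(nat x nat): A is in Q whenever every basic
  open neighbourhood of A (determined by a finite set F of coordinates) meets Q.\<close>
definition closed_quant2 :: "(nat \<times> nat) set set \<Rightarrow> bool" where
  "closed_quant2 Q \<longleftrightarrow>
     (\<forall>A. (\<forall>F. finite F \<longrightarrow> (\<exists>B\<in>Q. B \<inter> F = A \<inter> F)) \<longrightarrow> A \<in> Q)"

definition downward_closed2 :: "(nat \<times> nat) set set \<Rightarrow> bool" where
  "downward_closed2 Q \<longleftrightarrow> (\<forall>A\<in>Q. \<forall>B. B \<subseteq> A \<longrightarrow> B \<in> Q)"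

text \<open>p : n -> nat (only values on {0..<n} matter) is compatible with Q.\<close>
definition compatible2 :: "nat \<Rightarrow> (nat \<Rightarrow> nat) \<Rightarrow> (nat \<times> nat) set set \<Rightarrow> bool" where
  "compatible2 n p Q \<longleftrightarrow>
     (\<forall>A. A \<subseteq> {0..<n} \<times> {0..<n} \<longrightarrow> (A \<in> Q \<longleftrightarrow> pmap2 p A \<in> Q))"

definition fixes_quant2 :: "(nat \<Rightarrow> nat) \<Rightarrow> (nat \<times> nat) set set \<Rightarrow> bool" where
  "fixes_quant2 f Q \<longleftrightarrow> (\<forall>A. A \<in> Q \<longleftrightarrow> pmap2 f A \<in> Q)"

definition Aut2 :: "(nat \<times> nat) set set \<Rightarrow> (nat \<Rightarrow> nat) set" where
  "Aut2 Q = {f. bij f \<and> fixes_quant2 f Q}"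

definition good2 :: "(nat \<times> nat) set set \<Rightarrow> bool" where
  "good2 Q \<longleftrightarrow> closed_quant2 Q \<and> downward_closed2 Q \<and>
     (\<forall>n p. inj_on p {0..<n} \<and> compatible2 n p Q \<longrightarrow>
        (\<exists>f. bij f \<and> (\<forall>i<n. f i = p i) \<and> fixes_quant2 f Q))"

end

theory Submission
  imports Defs
begin

(* Fix the rigid "skeleton" S0 on nat: a loop at 0 together with all successor
   edges (i, i+1).  For a group G of permutations let Q_G consist of all A subset of nat x nat
   that are locally covered by G-translates of S0: every finite window of A lies inside g(S0)
   for some g in G.

   First, for an arbitrary reference set S, the quantifier of sets locally covered by G-translates
   of S is closed, downwards closed and fixed by every element of G; a finite set belongs to it iff
   it is covered by a single translate.  Second, S0 is rigid: if an injection p maps the initial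
   segment of S0 on {0..<n} into g(S0) with g injective, then g agrees with p below n.  Hence every
   finite injection compatible with Q_G agrees on its domain with an element of G, which gives the
   extension property of a good quantifier; and every automorphism of Q_G is a pointwise limit of
   elements of G, so it lies in G because G is closed. *)

lemma pmap2_comp: "pmap2 f (pmap2 g A) = pmap2 (f \<circ> g) A"
  unfolding pmap2_def by (force simp: image_image)

lemma pmap2_id: "pmap2 id A = A"
  unfolding pmap2_def by auto

lemma pmap2_mono: "A \<subseteq> B \<Longrightarrow> pmap2 f A \<subseteq> pmap2 f B"
  unfolding pmap2_def by auto

lemma finite_pmap2: "finite A \<Longrightarrow> finite (pmap2 f A)"
  unfolding pmap2_def by simp

lemma pmap2_window:
  assumes "inj h" and "finite F"
  obtains F' where "finite F'" and "pmap2 h A \<inter> F \<subseteq> pmap2 h (A \<inter> F')"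
proof
  let ?m = "\<lambda>(a::nat, b::nat). (h a, h b)"
  have "inj ?m" using assms(1) unfolding inj_def by auto
  then show "finite (?m -` F)" using assms(2) by (simp add: finite_vimageI)
  show "pmap2 h A \<inter> F \<subseteq> pmap2 h (A \<inter> ?m -` F)"
    unfolding pmap2_def by auto
qed

definition perm_group :: "(nat \<Rightarrow> nat) set \<Rightarrow> bool" where
  "perm_group G \<longleftrightarrow> (\<forall>f\<in>G. bij f) \<and> id \<in> G \<and>
     (\<forall>f\<in>G. \<forall>g\<in>G. f \<circ> g \<in> G) \<and> (\<forall>f\<in>G. inv f \<in> G)"

lemma closed_subgroup_perm_group:
  "closed_subgroup_Sinf G \<Longrightarrow> perm_group G"
  unfolding closed_subgroup_Sinf_def perm_group_def by blast

lemma closed_subgroup_limit: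
  assumes "closed_subgroup_Sinf G" and "bij f" and "\<And>n. \<exists>g\<in>G. \<forall>i<n. g i = f i"
  shows "f \<in> G"
  using assms unfolding closed_subgroup_Sinf_def by blast

section \<open>Quantifiers of sets locally covered by translates\<close>

definition local_cover :: "(nat \<Rightarrow> nat) set \<Rightarrow> (nat \<times> nat) set \<Rightarrow> (nat \<times> nat) set set" where
  "local_cover G S = {A. \<forall>F. finite F \<longrightarrow> (\<exists>g\<in>G. A \<inter> F \<subseteq> pmap2 g S)}"

lemma local_coverI:
  "(\<And>F. finite F \<Longrightarrow> \<exists>g\<in>G. A \<inter> F \<subseteq> pmap2 g S) \<Longrightarrow> A \<in> local_cover G S"
  unfolding local_cover_def by blast

lemma local_coverE:
  assumes "A \<in> local_cover G S" and "finite F"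
  obtains g where "g \<in> G" and "A \<inter> F \<subseteq> pmap2 g S"
  using assms unfolding local_cover_def by blast

lemma closed_local_cover: "closed_quant2 (local_cover G S)"
  unfolding closed_quant2_def
proof (intro allI impI)
  fix A assume approx: "\<forall>F. finite F \<longrightarrow> (\<exists>B\<in>local_cover G S. B \<inter> F = A \<inter> F)"
  show "A \<in> local_cover G S"
  proof (rule local_coverI)
    fix F :: "(nat \<times> nat) set" assume "finite F"
    then obtain B where "B \<in> local_cover G S" and "B \<inter> F = A \<inter> F" using approx by blast
    with \<open>finite F\<close> show "\<exists>g\<in>G. A \<inter> F \<subseteq> pmap2 g S"
      by (metis local_coverE)
  qed
qed

lemma downward_closed_local_cover: "downward_closed2 (local_cover G S)"
  unfolding downward_closed2_def local_cover_def by blast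

lemma finite_in_local_cover:
  assumes "finite A"
  shows "A \<in> local_cover G S \<longleftrightarrow> (\<exists>g\<in>G. A \<subseteq> pmap2 g S)"
proof
  assume "A \<in> local_cover G S"
  then show "\<exists>g\<in>G. A \<subseteq> pmap2 g S"
    using assms by (metis Int_absorb local_coverE)
qed (auto intro: local_coverI)

text \<open>Translating by an element of G preserves local covering, since G is closed under
  composition and windows can be pulled back along the translating permutation.\<close>

lemma local_cover_translate:
  assumes G: "perm_group G" and h: "h \<in> G" and A: "A \<in> local_cover G S"
  shows "pmap2 h A \<in> local_cover G S"
proof (rule local_coverI)
  fix F :: "(nat \<times> nat) set" assume "finite F"
  have "inj h" using G h unfolding perm_group_def by (simp add: bij_is_inj)
  then obtain F' where "finite F'" and window: "pmap2 h A \<inter> F \<subseteq> pmap2 h (A \<inter> F')"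
    using \<open>finite F\<close> by (rule pmap2_window)
  then obtain g where g: "g \<in> G" "A \<inter> F' \<subseteq> pmap2 g S"
    using A by (metis local_coverE)
  have "pmap2 h A \<inter> F \<subseteq> pmap2 h (pmap2 g S)"
    using window pmap2_mono[OF g(2)] by blast
  then have "pmap2 h A \<inter> F \<subseteq> pmap2 (h \<circ> g) S" by (simp add: pmap2_comp)
  moreover have "h \<circ> g \<in> G" using G h g(1) unfolding perm_group_def by blast
  ultimately show "\<exists>g\<in>G. pmap2 h A \<inter> F \<subseteq> pmap2 g S" by blast
qed

lemma fixes_local_cover:
  assumes G: "perm_group G" and h: "h \<in> G"
  shows "fixes_quant2 h (local_cover G S)"
  unfolding fixes_quant2_def
proof
  fix A
  have inv_h: "inv h \<in> G" and "bij h" using G h unfolding perm_group_def by auto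
  then have cancel: "pmap2 (inv h) (pmap2 h A) = A"
    by (simp add: pmap2_comp bij_is_inj pmap2_id)
  show "A \<in> local_cover G S \<longleftrightarrow> pmap2 h A \<in> local_cover G S"
    using local_cover_translate[OF G h, of A S] local_cover_translate[OF G inv_h, of "pmap2 h A" S]
    by (auto simp: cancel)
qed

section \<open>The rigid skeleton\<close>

definition skeleton :: "(nat \<times> nat) set" where
  "skeleton = {(0,0)} \<union> range (\<lambda>i. (i, Suc i))"

definition skeleton_upto :: "nat \<Rightarrow> (nat \<times> nat) set" where
  "skeleton_upto n = {(0,0)} \<union> (\<lambda>i. (i, Suc i)) ` {i. Suc i < n}"

lemma skeleton_upto_subset: "skeleton_upto n \<subseteq> skeleton"
  unfolding skeleton_upto_def skeleton_def by auto

lemma skeleton_upto_domain: "0 < n \<Longrightarrow> skeleton_upto n \<subseteq> {0..<n} \<times> {0..<n}"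
  unfolding skeleton_upto_def by auto

lemma finite_skeleton_upto: "finite (skeleton_upto n)"
proof -
  have "finite {i. Suc i < n}" by (rule finite_subset[of _ "{..<n}"]) auto
  then show ?thesis unfolding skeleton_upto_def by simp
qed

text \<open>By induction along the path: the loop
  forces g 0 = p 0, and the edge (i, i+1) forces g (i+1) = p (i+1), because the image edge cannot
  be the loop (p is injective) and g is injective.\<close>

lemma skeleton_rigid:
  assumes g: "inj g" and p: "inj_on p {0..<n}"
    and cover: "pmap2 p (skeleton_upto n) \<subseteq> pmap2 g skeleton"
  shows "\<forall>i<n. g i = p i"
proof -
  have edge: "\<exists>a b. (a, b) \<in> skeleton \<and> p x = g a \<and> p y = g b"
    if "(x, y) \<in> skeleton_upto n" for x y
    using cover that unfolding pmap2_def by force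
  have "g i = p i" if "i < n" for i
    using that
  proof (induction i)
    case 0
    have "(0,0) \<in> skeleton_upto n" by (simp add: skeleton_upto_def)
    then obtain a b where ab: "(a,b) \<in> skeleton" "p 0 = g a" "p 0 = g b" using edge by blast
    then have "a = b" using g by (metis injD)
    with ab(1) have "a = 0" by (auto simp: skeleton_def)
    then show ?case using ab by simp
  next
    case (Suc i)
    have "(i, Suc i) \<in> skeleton_upto n" using Suc.prems by (auto simp: skeleton_upto_def)
    then obtain a b where ab: "(a,b) \<in> skeleton" "p i = g a" "p (Suc i) = g b" using edge by blast
    have "a = i" using Suc ab(2) g by (metis Suc_lessD injD)
    show ?case
    proof (cases "(a,b) = (0,0)")
      case True
      then have "p (Suc i) = p 0" using ab \<open>a = i\<close> by simp
      moreover have "Suc i \<in> {0..<n}" and "0 \<in> {0..<n}" using Suc.prems by auto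
      ultimately have "Suc i = 0" by (rule inj_onD[OF p])
      then show ?thesis by simp
    next
      case False
      then have "b = Suc a" using ab(1) by (auto simp: skeleton_def)
      then show ?thesis using ab \<open>a = i\<close> by simp
    qed
  qed
  then show ?thesis by blast
qed

text \<open>Every finite injection compatible with the quantifier agrees on its domain with an element
  of G: compatibility carries the skeleton segment (which is covered by the identity translate)
  to a finite member, which is covered by one translate g(S0), and rigidity identifies g with p.\<close>

lemma compatible_agrees_with_group:
  assumes G: "perm_group G" and p: "inj_on p {0..<n}"
    and compat: "compatible2 n p (local_cover G skeleton)"
  shows "\<exists>g\<in>G. \<forall>i<n. g i = p i"
proof (cases "n = 0")
  case True
  then show ?thesis using G unfolding perm_group_def by auto
next
  case False
  have "id \<in> G" and "skeleton_upto n \<subseteq> pmap2 id skeleton"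
    using G skeleton_upto_subset unfolding perm_group_def by (auto simp: pmap2_id)
  then have "skeleton_upto n \<in> local_cover G skeleton"
    using finite_in_local_cover[OF finite_skeleton_upto] by blast
  then have "pmap2 p (skeleton_upto n) \<in> local_cover G skeleton"
    using compat skeleton_upto_domain False unfolding compatible2_def by blast
  then obtain g where g: "g \<in> G" "pmap2 p (skeleton_upto n) \<subseteq> pmap2 g skeleton"
    using finite_in_local_cover[OF finite_pmap2[OF finite_skeleton_upto]] by blast
  have "inj g" using G g(1) unfolding perm_group_def by (simp add: bij_is_inj)
  then show ?thesis using skeleton_rigid[OF _ p g(2)] g(1) by blast
qed

lemma good_local_cover_skeleton:
  assumes G: "perm_group G"
  shows "good2 (local_cover G skeleton)"
  unfolding good2_def
proof (intro conjI closed_local_cover downward_closed_local_cover allI impI)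
  fix n p assume "inj_on p {0..<n} \<and> compatible2 n p (local_cover G skeleton)"
  then obtain g where "g \<in> G" "\<forall>i<n. g i = p i"
    using compatible_agrees_with_group[OF G] by blast
  moreover have "bij g" using G \<open>g \<in> G\<close> unfolding perm_group_def by blast
  ultimately show "\<exists>f. bij f \<and> (\<forall>i<n. f i = p i) \<and> fixes_quant2 f (local_cover G skeleton)"
    using fixes_local_cover[OF G] by blast
qed

text \<open>An automorphism restricted to {0..<n} is a compatible finite injection, so it agrees there
  with an element of G; closedness of G then puts it into G.\<close>

lemma Aut_local_cover_skeleton:
  assumes G: "closed_subgroup_Sinf G"
  shows "Aut2 (local_cover G skeleton) = G"
proof
  have "perm_group G" using G by (rule closed_subgroup_perm_group)
  then show "G \<subseteq> Aut2 (local_cover G skeleton)"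
    unfolding Aut2_def using fixes_local_cover by (auto simp: perm_group_def)
  show "Aut2 (local_cover G skeleton) \<subseteq> G"
  proof
    fix f assume "f \<in> Aut2 (local_cover G skeleton)"
    then have "bij f" and "fixes_quant2 f (local_cover G skeleton)" unfolding Aut2_def by auto
    then have "compatible2 n f (local_cover G skeleton)" and "inj_on f {0..<n}" for n
      unfolding compatible2_def fixes_quant2_def by (auto intro: inj_on_subset[OF bij_is_inj])
    then have "\<exists>g\<in>G. \<forall>i<n. g i = f i" for n
      using compatible_agrees_with_group[OF \<open>perm_group G\<close>] by blast
    with G \<open>bij f\<close> show "f \<in> G" by (rule closed_subgroup_limit)
  qed
qed

theorem proposition13:
  fixes G :: "(nat \<Rightarrow> nat) set"
  assumes "closed_subgroup_Sinf G"
  shows "\<exists>Q :: (nat \<times> nat) set set. good2 Q \<and> Aut2 Q = G"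
proof -
  have "good2 (local_cover G skeleton)"
    using closed_subgroup_perm_group[OF assms] by (rule good_local_cover_skeleton)
  moreover have "Aut2 (local_cover G skeleton) = G"
    using assms by (rule Aut_local_cover_skeleton)
  ultimately show ?thesis by blast
qed

end
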